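(* Let $\kappa_n>0$, $\gamma>0$ and $\chi_n,\Omega,\tilde\omega_n\in\mathbb{R}$, and put $Q_n=-(\gamma+i\Omega-i\tilde\omega_n)$ and $S_n=\gamma\chi_n/2$. Let $F_n:[0,\infty)\to\mathbb{C}$ be the solution of $$\frac{\mathrm{d}}{\mathrm{d}t}F_n(t)=\kappa_nF_n(t)^2+Q_nF_n(t)+S_n,\qquad F_n(0)=0 .$$ If $\tilde\omega_n=\Omega$ and $4\kappa_nS_n-Q_n^2\le 0$, then $F_n(t)$ converges to a constant as $t\to\infty$. Consequently the time-varying coefficients $\kappa_n(F_n(t)+F_n^*(t))$, $\kappa_nF_n^*(t)$ and $\kappa_nF_n(t)$ in the evolution equations of $\langle\sigma_n^+\sigma_n^-\rangle$, $\langle\sigma_n^+a\rangle$ and $\langle\sigma_n^-a^\dagger\rangle$ converge to constants, i.e. these trajectories become Markovian as $t\to\infty$.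
   Context: Setting: an $N$-level ladder atom coupled to a cavity mode (annihilation operator $a$) and to a non-Markovian bosonic environment with memory kernel $\alpha(t,s)=\frac{\gamma}{2}e^{-\gamma|t-s|-i\Omega(t-s)}$; $\sigma_n^-=|n-1\rangle\langle n|$, $\sigma_n^+=|n\rangle\langle n-1|$, $\tilde\omega_n$ is the transition frequency between levels $n-1$ and $n$, $\kappa_n$ is the decay rate of level $n$ to the environment and $\chi_n$ a real environmental constant. The non-Markovian decay is encoded by the complex function $F_n(t)$ defined by the Riccati equation above; the interaction is called Markovian when $F_n$ is constant, and the dynamics is said to converge to Markovian when $F_n(t)$ converges to a constant as $t\to\infty$. With $\tilde g_n=g_ne^{i\Delta_nt}$, the mean values satisfy, among others, $\frac{d}{dt}\langle\sigma_n^+ a\rangle=-i\Delta_n\langle\sigma_n^+a\rangle-i\tilde g_n^*\langle\sigma_n^+\sigma_n^-\rangle+i\tilde g_n^*\langle a^\dagger a\rangle-F_n^*(t)\kappa_n\langle\sigma_n^+a\rangle$ (and its conjugate for $\langle\sigma_n^-a^\dagger\rangle$), and the population equation for $\langle\sigma_n^+\sigma_n^-\rangle$ contains the decay term $-(F_n+F_n^* )\kappa_n\langle\sigma_n^+\sigma_n^-\rangle$. *)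

theory Defs
  imports "HOL-Analysis.Analysis"
begin

end

(*
  For \<omega> = \<Omega> all coefficients of the Riccati equation are real. The imaginary part v of F
  then solves the linear equation v' = (2\<kappa> Re F - \<gamma>) v with v(0) = 0, so it vanishes, and the
  real part solves u' = \<kappa> (u - r\<^sub>1) (u - r\<^sub>2), where the discriminant condition makes the
  roots r\<^sub>1 \<le> r\<^sub>2 real, and u(0) = 0 \<le> r\<^sub>2. Each factor u - r\<^sub>i solves a linear equation
  y' = c y and hence never changes sign. So u \<le> r\<^sub>2 throughout, the coefficient \<kappa> (u - r\<^sub>2) in
  the equation for u - r\<^sub>1 is nonpositive, and |u - r\<^sub>1| decreases to a limit.
*)

theory Submission
  imports Defs "HOL-Library.Quadratic_Discriminant"
begin

lemma linear_ode_zero_iff_on_interval: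
  fixes y c :: "real \<Rightarrow> real"
  assumes "a \<le> b" and cont: "continuous_on {a..b} y"
    and der: "\<And>s. a < s \<Longrightarrow> s < b \<Longrightarrow> (y has_real_derivative y s * c s) (at s)"
    and bound: "\<And>s. a < s \<Longrightarrow> s < b \<Longrightarrow> \<bar>c s\<bar> \<le> M"
  shows "y a = 0 \<longleftrightarrow> y b = 0"
proof -
  define w where "w k x = (y x)\<^sup>2 * exp (k * x)" for k x
  have w_der: "(w k has_real_derivative w k s * (2 * c s + k)) (at s)" if "a < s" "s < b" for k s
    unfolding w_def
    by (rule derivative_eq_intros refl der that)+ (simp add: algebra_simps power2_eq_square)
  have w_cont: "continuous_on {a..b} (w k)" for k
    unfolding w_def by (intro continuous_intros cont)
  have w_nonneg: "w k x \<ge> 0" for k x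
    unfolding w_def by simp
  have w_zero_iff: "w k x = 0 \<longleftrightarrow> y x = 0" for k x
    unfolding w_def by simp
  \<comment> \<open>The weight \<open>exp (\<mp>2Mx)\<close> makes \<open>y\<^sup>2\<close> monotone in either direction.\<close>
  have "w (- 2 * M) b \<le> w (- 2 * M) a"
  proof (rule DERIV_nonpos_imp_decreasing_open[OF \<open>a \<le> b\<close> _ w_cont])
    fix s assume s: "a < s" "s < b"
    have "w (- 2 * M) s * (2 * c s + - 2 * M) \<le> 0"
      using bound[OF s] w_nonneg by (intro mult_nonneg_nonpos) auto
    then show "\<exists>d. (w (- 2 * M) has_real_derivative d) (at s) \<and> d \<le> 0"
      using w_der[OF s] by blast
  qed
  moreover have "w (2 * M) a \<le> w (2 * M) b"
  proof (rule DERIV_nonneg_imp_increasing_open[OF \<open>a \<le> b\<close> _ w_cont])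
    fix s assume s: "a < s" "s < b"
    have "w (2 * M) s * (2 * c s + 2 * M) \<ge> 0"
      using bound[OF s] w_nonneg by (intro mult_nonneg_nonneg) auto
    then show "\<exists>d. (w (2 * M) has_real_derivative d) (at s) \<and> d \<ge> 0"
      using w_der[OF s] by blast
  qed
  ultimately show ?thesis
    using w_nonneg w_zero_iff by (metis order_antisym)
qed

lemma linear_ode_zero_iff:
  fixes y c :: "real \<Rightarrow> real"
  assumes der: "\<And>t. t \<ge> 0 \<Longrightarrow> (y has_real_derivative y t * c t) (at t within {0..})"
    and c_cont: "continuous_on {0..} c"
    and "s \<ge> 0" "t \<ge> 0"
  shows "y s = 0 \<longleftrightarrow> y t = 0"
proof -
  define a b where "a = min s t" and "b = max s t"
  have ab: "0 \<le> a" "a \<le> b" and sub: "{a..b} \<subseteq> {0..}"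
    using \<open>s \<ge> 0\<close> \<open>t \<ge> 0\<close> by (auto simp: a_def b_def)
  have "compact (c ` {a..b})"
    using c_cont sub by (intro compact_continuous_image) (auto intro: continuous_on_subset)
  then obtain M where M: "\<And>s. s \<in> {a..b} \<Longrightarrow> \<bar>c s\<bar> \<le> M"
    by (metis compact_imp_bounded bounded_real imageI)
  have "continuous_on {0..} y"
    using der by (intro DERIV_continuous_on) auto
  moreover have "(y has_real_derivative y s * c s) (at s)" if "s > 0" for s
    using der[of s] that at_within_interior[of s "{0..}"] by simp
  ultimately have "y a = 0 \<longleftrightarrow> y b = 0"
    using ab sub M
    by (intro linear_ode_zero_iff_on_interval[of a b _ c M]) (auto intro: continuous_on_subset)
  then show ?thesis
    by (cases "s \<le> t") (auto simp: a_def b_def)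
qed

lemma linear_ode_sgn_eq:
  fixes y c :: "real \<Rightarrow> real"
  assumes der: "\<And>t. t \<ge> 0 \<Longrightarrow> (y has_real_derivative y t * c t) (at t within {0..})"
    and c_cont: "continuous_on {0..} c"
    and "t \<ge> 0"
  shows "sgn (y t) = sgn (y 0)"
proof (cases "y 0 = 0")
  case True
  then show ?thesis
    using linear_ode_zero_iff[OF der c_cont, of 0 t] \<open>t \<ge> 0\<close> by simp
next
  case False
  have nonzero: "y s \<noteq> 0" if "s \<ge> 0" for s
    using linear_ode_zero_iff[OF der c_cont, of 0 s] False that by simp
  have "continuous_on {0..} y"
    using der by (intro DERIV_continuous_on) auto
  then have conn: "connected (y ` {0..t})"
    by (intro connected_continuous_image) (auto intro: continuous_on_subset)
  have "0 \<notin> y ` {0..t}" and ends: "y 0 \<in> y ` {0..t}" "y t \<in> y ` {0..t}"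
    using nonzero \<open>t \<ge> 0\<close> by auto
  then have "\<not> (y 0 \<le> 0 \<and> 0 \<le> y t)" "\<not> (y t \<le> 0 \<and> 0 \<le> y 0)"
    using connectedD_interval[OF conn ends] connectedD_interval[OF conn ends(2,1)] by blast+
  then show ?thesis
    by (auto simp: sgn_if)
qed

lemma antimono_on_bdd_below_tendsto_at_top:
  fixes f :: "real \<Rightarrow> real"
  assumes "antimono_on {0..} f" and "bdd_below (f ` {0..})"
  shows "(f \<longlongrightarrow> Inf (f ` {0..})) at_top"
proof (rule decreasing_tendsto)
  show "\<forall>\<^sub>F t in at_top. Inf (f ` {0..}) \<le> f t"
    using eventually_ge_at_top[of "0::real"]
    by eventually_elim (auto intro!: cInf_lower assms(2))
next
  fix x assume "Inf (f ` {0..}) < x"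
  then obtain a where a: "a \<ge> 0" "f a < x"
    using cInf_lessD[of "f ` {0..}" x] by auto
  show "\<forall>\<^sub>F t in at_top. f t < x"
    using eventually_ge_at_top[of a]
  proof eventually_elim
    fix t assume "a \<le> t"
    then have "f t \<le> f a"
      using a by (intro monotone_onD[OF assms(1)]) auto
    with a show "f t < x" by simp
  qed
qed

lemma linear_ode_tendsto_at_top:
  fixes y c :: "real \<Rightarrow> real"
  assumes der: "\<And>t. t \<ge> 0 \<Longrightarrow> (y has_real_derivative y t * c t) (at t within {0..})"
    and c_cont: "continuous_on {0..} c"
    and c_nonpos: "\<And>t. t \<ge> 0 \<Longrightarrow> c t \<le> 0"
  shows "\<exists>L. (y \<longlongrightarrow> L) at_top"
proof -
  have y_cont: "continuous_on {0..} y"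
    using der by (intro DERIV_continuous_on) auto
  have "antimono_on {0..} (\<lambda>t. (y t)\<^sup>2)"
  proof (rule monotone_onI)
    fix a b :: real assume "a \<in> {0..}" "b \<in> {0..}" "a \<le> b"
    then show "(y b)\<^sup>2 \<le> (y a)\<^sup>2"
    proof (intro DERIV_nonpos_imp_decreasing_open[of a b])
      fix s assume "a \<in> {0..}" "a < s"
      then have "((\<lambda>t. (y t)\<^sup>2) has_real_derivative 2 * (y s)\<^sup>2 * c s) (at s)"
        using der[of s] at_within_interior[of s "{0..}"]
        by (auto intro!: derivative_eq_intros simp: power2_eq_square)
      moreover have "2 * (y s)\<^sup>2 * c s \<le> 0"
        using c_nonpos[of s] \<open>a \<in> {0..}\<close> \<open>a < s\<close> by (simp add: mult_nonneg_nonpos)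
      ultimately show "\<exists>d. ((\<lambda>t. (y t)\<^sup>2) has_real_derivative d) (at s) \<and> d \<le> 0"
        by blast
    qed (auto intro!: continuous_intros intro: continuous_on_subset[OF y_cont])
  qed
  then have "((\<lambda>t. (y t)\<^sup>2) \<longlongrightarrow> Inf ((\<lambda>t. (y t)\<^sup>2) ` {0..})) at_top"
    by (intro antimono_on_bdd_below_tendsto_at_top) (auto intro: bdd_belowI[of _ 0])
  then have "((\<lambda>t. sgn (y 0) * sqrt ((y t)\<^sup>2)) \<longlongrightarrow>
      sgn (y 0) * sqrt (Inf ((\<lambda>t. (y t)\<^sup>2) ` {0..}))) at_top"
    by (intro tendsto_intros)
  moreover have "\<forall>\<^sub>F t in at_top. sgn (y 0) * sqrt ((y t)\<^sup>2) = y t"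
    using eventually_ge_at_top[of "0::real"]
  proof eventually_elim
    fix t :: real assume "t \<ge> 0"
    then have "sgn (y 0) * \<bar>y t\<bar> = sgn (y t) * \<bar>y t\<bar>"
      using linear_ode_sgn_eq[OF der c_cont \<open>t \<ge> 0\<close>] by simp
    then show "sgn (y 0) * sqrt ((y t)\<^sup>2) = y t"
      by (simp add: sgn_mult_abs)
  qed
  ultimately have "(y \<longlongrightarrow> sgn (y 0) * sqrt (Inf ((\<lambda>t. (y t)\<^sup>2) ` {0..}))) at_top"
    by (rule tendsto_cong[THEN iffD1, rotated])
  then show ?thesis ..
qed

lemma riccati_tendsto_at_top:
  fixes u :: "real \<Rightarrow> real" and k r1 r2 :: real
  assumes der: "\<And>t. t \<ge> 0 \<Longrightarrow> (u has_real_derivative k * (u t - r1) * (u t - r2)) (at t within {0..})"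
    and "k \<ge> 0" and "u 0 \<le> r2"
  shows "\<exists>L. (u \<longlongrightarrow> L) at_top"
proof -
  have u_cont: "continuous_on {0..} u"
    using der by (intro DERIV_continuous_on) auto
  have der_minus: "((\<lambda>t. u t - r) has_real_derivative k * (u t - r1) * (u t - r2)) (at t within {0..})"
    if "t \<ge> 0" for r t
    using der[OF that] by (auto intro!: derivative_eq_intros)
  have sign: "sgn (u t - r2) = sgn (u 0 - r2)" if "t \<ge> 0" for t
    using der_minus \<open>k \<ge> 0\<close> that
    by (intro linear_ode_sgn_eq[where c = "\<lambda>t. k * (u t - r1)"])
      (auto intro!: continuous_intros u_cont simp: algebra_simps)
  have coeff_nonpos: "k * (u t - r2) \<le> 0" if "t \<ge> 0" for t
  proof -
    have "u t - r2 \<le> 0"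
      using sign[OF that] \<open>u 0 \<le> r2\<close> by (auto simp: sgn_if split: if_splits)
    with \<open>k \<ge> 0\<close> show ?thesis
      by (simp add: mult_nonneg_nonpos)
  qed
  have "\<exists>L. ((\<lambda>t. u t - r1) \<longlongrightarrow> L) at_top"
    using der_minus coeff_nonpos
    by (intro linear_ode_tendsto_at_top[where c = "\<lambda>t. k * (u t - r2)"])
      (auto intro!: continuous_intros u_cont simp: algebra_simps)
  then obtain L where "((\<lambda>t. u t - r1) \<longlongrightarrow> L) at_top" ..
  from tendsto_add[OF this tendsto_const[of r1]] show ?thesis
    by auto
qed

lemma riccati_real_coeffs_Im_eq_0:
  fixes F :: "real \<Rightarrow> complex" and k q s :: real
  assumes der: "\<And>t. t \<ge> 0 \<Longrightarrow> (F has_vector_derivative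
      (of_real k * (F t)\<^sup>2 + of_real q * F t + of_real s)) (at t within {0..})"
    and "Im (F 0) = 0" and "t \<ge> 0"
  shows "Im (F t) = 0"
proof -
  have "continuous_on {0..} F"
    using der by (intro continuous_on_vector_derivative) auto
  then have "continuous_on {0..} (\<lambda>t. 2 * k * Re (F t) + q)"
    by (intro continuous_intros)
  moreover have "((\<lambda>t. Im (F t)) has_real_derivative Im (F t) * (2 * k * Re (F t) + q))
      (at t within {0..})" if "t \<ge> 0" for t
    using has_field_derivative_Im[OF der[OF that]] by (simp add: power2_eq_square algebra_simps)
  ultimately have "Im (F 0) = 0 \<longleftrightarrow> Im (F t) = 0"
    using \<open>t \<ge> 0\<close> by (intro linear_ode_zero_iff[where y = "\<lambda>t. Im (F t)"]) auto
  with assms(2) show ?thesis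
    by simp
qed

lemma quadratic_eq_factored:
  fixes a b c x :: real
  assumes "a \<noteq> 0" and "discrim a b c \<ge> 0"
  shows "a * x\<^sup>2 + b * x + c =
    a * (x - (- b - sqrt (discrim a b c)) / (2 * a)) * (x - (- b + sqrt (discrim a b c)) / (2 * a))"
proof -
  have "(sqrt (discrim a b c))\<^sup>2 = b\<^sup>2 - 4 * a * c"
    using assms(2) by (simp add: discrim_def)
  with assms(1) show ?thesis
    by (simp add: field_simps power2_eq_square) algebra
qed

theorem theorem1:
  fixes \<kappa> \<gamma> chi \<Omega> \<omega> :: real
    and Q S :: complex
    and F :: "real \<Rightarrow> complex"
  assumes kpos: "\<kappa> > 0" and gpos: "\<gamma> > 0"
    and Q_def: "Q = - (complex_of_real \<gamma> + \<i> * complex_of_real \<Omega> - \<i> * complex_of_real \<omega>)"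
    and S_def: "S = complex_of_real (\<gamma> * chi / 2)"
    and ode: "\<And>t. t \<ge> 0 \<Longrightarrow>
       (F has_vector_derivative (complex_of_real \<kappa> * (F t)\<^sup>2 + Q * F t + S)) (at t within {0..})"
    and init: "F 0 = 0"
    and res: "\<omega> = \<Omega>"
    and disc: "Re (4 * complex_of_real \<kappa> * S - Q\<^sup>2) \<le> 0"
  shows "(\<exists>L. (F \<longlongrightarrow> L) at_top)
     \<and> (\<exists>c. ((\<lambda>t. complex_of_real \<kappa> * (F t + cnj (F t))) \<longlongrightarrow> c) at_top)
     \<and> (\<exists>c. ((\<lambda>t. complex_of_real \<kappa> * cnj (F t)) \<longlongrightarrow> c) at_top)
     \<and> (\<exists>c. ((\<lambda>t. complex_of_real \<kappa> * F t) \<longlongrightarrow> c) at_top)"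
proof -
  define s where "s = \<gamma> * chi / 2"
  define \<Delta> where "\<Delta> = discrim \<kappa> (- \<gamma>) s"
  have ode_real: "(F has_vector_derivative
      (of_real \<kappa> * (F t)\<^sup>2 + of_real (- \<gamma>) * F t + of_real s)) (at t within {0..})" if "t \<ge> 0" for t
    using ode[OF that] by (simp add: Q_def S_def s_def res)
  have Im_F: "Im (F t) = 0" if "t \<ge> 0" for t
    using riccati_real_coeffs_Im_eq_0[OF ode_real _ that] init by simp
  have "\<Delta> \<ge> 0"
    using disc by (simp add: \<Delta>_def discrim_def Q_def S_def s_def res power2_eq_square)
  then have "((\<lambda>t. Re (F t)) has_real_derivative \<kappa> * (Re (F t) - (\<gamma> - sqrt \<Delta>) / (2 * \<kappa>))
      * (Re (F t) - (\<gamma> + sqrt \<Delta>) / (2 * \<kappa>))) (at t within {0..})" if "t \<ge> 0" for t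
    using has_field_derivative_Re[OF ode_real[OF that]] Im_F[OF that]
      quadratic_eq_factored[of \<kappa> "- \<gamma>" s "Re (F t)"] kpos
    by (simp add: \<Delta>_def power2_eq_square)
  moreover have "Re (F 0) \<le> (\<gamma> + sqrt \<Delta>) / (2 * \<kappa>)"
    using init kpos gpos \<open>\<Delta> \<ge> 0\<close> by simp
  ultimately have "\<exists>L. ((\<lambda>t. Re (F t)) \<longlongrightarrow> L) at_top"
    using kpos by (intro riccati_tendsto_at_top) auto
  then obtain L where "((\<lambda>t. Re (F t)) \<longlongrightarrow> L) at_top" ..
  then have "((\<lambda>t. of_real (Re (F t))) \<longlongrightarrow> complex_of_real L) at_top"
    by (rule tendsto_of_real)
  moreover have "\<forall>\<^sub>F t in at_top. of_real (Re (F t)) = F t"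
    using eventually_ge_at_top[of "0::real"] by eventually_elim (simp add: Im_F complex_eq_iff)
  ultimately have F_lim: "(F \<longlongrightarrow> complex_of_real L) at_top"
    by (rule tendsto_cong[THEN iffD1, rotated])
  then show ?thesis
    using tendsto_mult_left[OF tendsto_add[OF F_lim tendsto_cnj[OF F_lim]]]
      tendsto_mult_left[OF tendsto_cnj[OF F_lim]] tendsto_mult_left[OF F_lim] by blast
qed

end
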